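(* Let $\Omega\subset\mathbb{C}^n$ be a bounded domain, let $\mathcal R$ and $\mathcal R'$ be quasi-free Hilbert modules of rank $m$ over $A(\Omega)$ with generating sets $\{f_i\}_{i=1}^m$ and $\{g_i\}_{i=1}^m$, and let $X:\mathcal R\to\mathcal R'$ be a module map with $Xf_i=\sum_{j=1}^m\psi_{ij}g_j$ for $1\le i\le m$, where $\Psi=(\psi_{ij})\in\mathrm{Hol}_m(\Omega)$. Then for every $z\in\Omega$ and $1\le i\le m$, \[(X\otimes_{A(\Omega)}1_{\mathbb C_z})(f_i\otimes_{A(\Omega)}1_z)=\sum_{j=1}^m\psi_{ij}(z)\,(g_j\otimes_{A(\Omega)}1_z).\]
   Context: $A(\Omega)$ is the closure, in the supremum norm on $\Omega$, of the set of functions holomorphic on some neighbourhood of $\overline\Omega$; $\ell^2_m$ is the $m$-dimensional Hilbert space ($m$ finite) and $\mathrm{Hol}_m(\Omega)$ is the space of holomorphic $\mathcal L(\ell^2_m)$-valued functions on $\Omega$. A quasi-free Hilbert module of rank $m$ over $A(\Omega)$ is a Hilbert space $\mathcal R$ obtained as the completion of $A(\Omega)\otimes\ell^2_m$ (regarded as $\ell^2_m$-valued holomorphic functions on $\Omega$) with respect to an inner product such that: (1) for each $z\in\Omega$ evaluation at $z$ is bounded, with norm locally uniformly bounded in $z$; (2) $\|\varphi F\|_{\mathcal R}\le\|\varphi\|_{A(\Omega)}\|F\|_{\mathcal R}$; (3) if $(F_i)$ is Cauchy in $\mathcal R$-norm, then $F_i(z)\to0$ for all $z$ iff $\|F_i\|_{\mathcal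 R}\to0$. $A(\Omega)$ acts by multiplication. For $z\in\Omega$, $\mathbb C_z$ is $\mathbb C$ with action $\varphi\cdot\lambda=\varphi(z)\lambda$; the localization $\mathcal R\otimes_{A(\Omega)}\mathbb C_z$ is identified with $\mathcal R/\mathcal R_z$, $\mathcal R_z$ the closure of $\{\varphi h:\varphi\in A(\Omega),\varphi(z)=0,h\in\mathcal R\}$; $h\otimes 1_z$ is the class of $h$, and $X\otimes1_{\mathbb C_z}$ is the induced map $h\otimes1_z\mapsto Xh\otimes1_z$. A generating set is $\{f_1,\dots,f_m\}\subset\mathcal R$ whose $A(\Omega)$-multiples span a dense subspace and with $\{f_i\otimes1_z\}$ a basis of $\mathcal R\otimes_{A(\Omega)}\mathbb C_z$ for each $z$. A module map is a bounded linear $X$ with $X(\varphi h)=\varphi X(h)$. *)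

theory Defs
  imports "HOL-Analysis.Analysis"
begin

text \<open>Points of C^n are vectors z :: complex^'n; the space l^2_m is complex^'m
  (Euclidean norm), m = CARD('m).  Elements of a Hilbert module are
  l^2_m-valued functions on Omega, extended by 0 outside Omega.\<close>

definition holo :: "(complex^'n) set \<Rightarrow> (complex^'n \<Rightarrow> complex) \<Rightarrow> bool" where
  "holo U f \<longleftrightarrow>
     (\<forall>z\<in>U. \<exists>D::complex^'n. (f has_derivative (\<lambda>h. \<Sum>k\<in>UNIV. D$k * h$k)) (at z))"

definition vholo :: "(complex^'n) set \<Rightarrow> (complex^'n \<Rightarrow> complex^'m) \<Rightarrow> bool" where
  "vholo U F \<longleftrightarrow> (\<forall>j. holo U (\<lambda>w. F w $ j))"

definition bounded_domain :: "(complex^'n) set \<Rightarrow> bool" where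
  "bounded_domain \<Omega> \<longleftrightarrow> open \<Omega> \<and> connected \<Omega> \<and> bounded \<Omega> \<and> \<Omega> \<noteq> {}"

definition A_pre :: "(complex^'n) set \<Rightarrow> (complex^'n \<Rightarrow> complex) set" where
  "A_pre \<Omega> = {\<phi>. \<exists>U. open U \<and> closure \<Omega> \<subseteq> U \<and> holo U \<phi>}"

definition A_alg :: "(complex^'n) set \<Rightarrow> (complex^'n \<Rightarrow> complex) set" where
  "A_alg \<Omega> = {\<phi>. \<forall>e>0. \<exists>\<psi>\<in>A_pre \<Omega>. \<forall>z\<in>\<Omega>. cmod (\<phi> z - \<psi> z) < e}"

definition supn :: "(complex^'n) set \<Rightarrow> (complex^'n \<Rightarrow> complex) \<Rightarrow> real" where
  "supn \<Omega> \<phi> = (SUP z\<in>\<Omega>. cmod (\<phi> z))"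

definition restr :: "(complex^'n) set \<Rightarrow> (complex^'n \<Rightarrow> complex^'m) \<Rightarrow> complex^'n \<Rightarrow> complex^'m" where
  "restr \<Omega> F = (\<lambda>w. if w \<in> \<Omega> then F w else 0)"

definition fdiff :: "('a \<Rightarrow> complex^'m) \<Rightarrow> ('a \<Rightarrow> complex^'m) \<Rightarrow> 'a \<Rightarrow> complex^'m" where
  "fdiff F G = (\<lambda>w. F w - G w)"

definition fsc :: "complex \<Rightarrow> ('a \<Rightarrow> complex^'m) \<Rightarrow> 'a \<Rightarrow> complex^'m" where
  "fsc c F = (\<lambda>w. c *s F w)"

definition mult :: "('a \<Rightarrow> complex) \<Rightarrow> ('a \<Rightarrow> complex^'m) \<Rightarrow> 'a \<Rightarrow> complex^'m" where
  "mult \<phi> F = (\<lambda>w. \<phi> w *s F w)"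

text \<open>A(Omega) tensor l^2_m, as l^2_m-valued functions on Omega.\<close>
definition alg_tensor :: "(complex^'n) set \<Rightarrow> (complex^'n \<Rightarrow> complex^'m) set" where
  "alg_tensor \<Omega> = {restr \<Omega> F | F. \<forall>j. (\<lambda>w. F w $ j) \<in> A_alg \<Omega>}"

definition hnorm :: "(('a \<Rightarrow> complex^'m) \<Rightarrow> ('a \<Rightarrow> complex^'m) \<Rightarrow> complex)
    \<Rightarrow> ('a \<Rightarrow> complex^'m) \<Rightarrow> real" where
  "hnorm ip F = sqrt (cmod (ip F F))"

definition hcauchy :: "('a \<Rightarrow> complex^'m) set \<Rightarrow> (('a \<Rightarrow> complex^'m) \<Rightarrow> ('a \<Rightarrow> complex^'m) \<Rightarrow> complex)
    \<Rightarrow> (nat \<Rightarrow> 'a \<Rightarrow> complex^'m) \<Rightarrow> bool" where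
  "hcauchy R ip S \<longleftrightarrow> (\<forall>k. S k \<in> R) \<and>
     (\<forall>e>0. \<exists>N. \<forall>a\<ge>N. \<forall>b\<ge>N. hnorm ip (fdiff (S a) (S b)) < e)"

text \<open>Quasi-free Hilbert module of rank m = CARD('m) over A(Omega), with inner product ip
  (linear in the first, conjugate-linear in the second argument).\<close>
definition qf_module :: "(complex^'n) set \<Rightarrow> (complex^'n \<Rightarrow> complex^'m) set
    \<Rightarrow> ((complex^'n \<Rightarrow> complex^'m) \<Rightarrow> (complex^'n \<Rightarrow> complex^'m) \<Rightarrow> complex) \<Rightarrow> bool" where
  "qf_module \<Omega> R ip \<longleftrightarrow>
     (\<forall>F\<in>R. vholo \<Omega> F \<and> (\<forall>w. w \<notin> \<Omega> \<longrightarrow> F w = 0))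
   \<and> (\<lambda>w. 0) \<in> R
   \<and> (\<forall>F\<in>R. \<forall>G\<in>R. (\<lambda>w. F w + G w) \<in> R)
   \<and> (\<forall>c. \<forall>F\<in>R. fsc c F \<in> R)
   \<and> (\<forall>F\<in>R. \<forall>G\<in>R. \<forall>H\<in>R. ip (\<lambda>w. F w + G w) H = ip F H + ip G H)
   \<and> (\<forall>c. \<forall>F\<in>R. \<forall>H\<in>R. ip (fsc c F) H = c * ip F H)
   \<and> (\<forall>F\<in>R. \<forall>G\<in>R. ip G F = cnj (ip F G))
   \<and> (\<forall>F\<in>R. F \<noteq> (\<lambda>w. 0) \<longrightarrow> Re (ip F F) > 0)
   \<comment> \<open>completeness\<close>
   \<and> (\<forall>S. hcauchy R ip S \<longrightarrow> (\<exists>F\<in>R. (\<lambda>k. hnorm ip (fdiff (S k) F)) \<longlonglongrightarrow> 0))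
   \<comment> \<open>R is the completion of A(Omega) tensor l^2_m\<close>
   \<and> alg_tensor \<Omega> \<subseteq> R
   \<and> (\<forall>F\<in>R. \<forall>e>0. \<exists>G\<in>alg_tensor \<Omega>. hnorm ip (fdiff F G) < e)
   \<comment> \<open>(1) bounded evaluations, locally uniformly\<close>
   \<and> (\<forall>z\<in>\<Omega>. \<exists>r>0. \<exists>C. \<forall>w\<in>ball z r. \<forall>F\<in>R. norm (F w) \<le> C * hnorm ip F)
   \<comment> \<open>(2) contractive module action\<close>
   \<and> (\<forall>\<phi>\<in>A_alg \<Omega>. \<forall>F\<in>R. mult \<phi> F \<in> R \<and> hnorm ip (mult \<phi> F) \<le> supn \<Omega> \<phi> * hnorm ip F)
   \<comment> \<open>(3)\<close>
   \<and> (\<forall>S. hcauchy R ip S \<longrightarrow>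
        ((\<forall>z\<in>\<Omega>. (\<lambda>k. S k z) \<longlonglongrightarrow> 0) \<longleftrightarrow> (\<lambda>k. hnorm ip (S k)) \<longlonglongrightarrow> 0))"

definition loc_sub :: "(complex^'n) set \<Rightarrow> (complex^'n \<Rightarrow> complex^'m) set
    \<Rightarrow> ((complex^'n \<Rightarrow> complex^'m) \<Rightarrow> (complex^'n \<Rightarrow> complex^'m) \<Rightarrow> complex)
    \<Rightarrow> complex^'n \<Rightarrow> (complex^'n \<Rightarrow> complex^'m) set" where
  "loc_sub \<Omega> R ip z =
     {F\<in>R. \<forall>e>0. \<exists>(N::nat) \<phi> h. (\<forall>k<N. \<phi> k \<in> A_alg \<Omega> \<and> \<phi> k z = 0 \<and> h k \<in> R) \<and>
        hnorm ip (fdiff F (\<lambda>w. \<Sum>k<N. \<phi> k w *s h k w)) < e}"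

text \<open>h \<otimes> 1_z: the class of h in R / R_z (as a coset).\<close>
definition loc_class :: "(complex^'n) set \<Rightarrow> (complex^'n \<Rightarrow> complex^'m) set
    \<Rightarrow> ((complex^'n \<Rightarrow> complex^'m) \<Rightarrow> (complex^'n \<Rightarrow> complex^'m) \<Rightarrow> complex)
    \<Rightarrow> complex^'n \<Rightarrow> (complex^'n \<Rightarrow> complex^'m) \<Rightarrow> (complex^'n \<Rightarrow> complex^'m) set" where
  "loc_class \<Omega> R ip z h = {G\<in>R. fdiff h G \<in> loc_sub \<Omega> R ip z}"

text \<open>X \<otimes> 1_{C_z}: the induced map on classes, h \<otimes> 1_z \<mapsto> X h \<otimes> 1_z.\<close>
definition loc_map :: "(complex^'n) set \<Rightarrow> (complex^'n \<Rightarrow> complex^'m) set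
    \<Rightarrow> ((complex^'n \<Rightarrow> complex^'m) \<Rightarrow> (complex^'n \<Rightarrow> complex^'m) \<Rightarrow> complex) \<Rightarrow> complex^'n
    \<Rightarrow> ((complex^'n \<Rightarrow> complex^'m) \<Rightarrow> (complex^'n \<Rightarrow> complex^'m))
    \<Rightarrow> (complex^'n \<Rightarrow> complex^'m) set \<Rightarrow> (complex^'n \<Rightarrow> complex^'m) set" where
  "loc_map \<Omega> R' ip' z X c = (\<Union>h\<in>c. loc_class \<Omega> R' ip' z (X h))"

definition generating_set :: "(complex^'n) set \<Rightarrow> (complex^'n \<Rightarrow> complex^'m) set
    \<Rightarrow> ((complex^'n \<Rightarrow> complex^'m) \<Rightarrow> (complex^'n \<Rightarrow> complex^'m) \<Rightarrow> complex)
    \<Rightarrow> ('m \<Rightarrow> complex^'n \<Rightarrow> complex^'m) \<Rightarrow> bool" where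
  "generating_set \<Omega> R ip f \<longleftrightarrow>
     (\<forall>i. f i \<in> R)
   \<and> (\<forall>F\<in>R. \<forall>e>0. \<exists>\<phi>. (\<forall>i. \<phi> i \<in> A_alg \<Omega>) \<and>
        hnorm ip (fdiff F (\<lambda>w. \<Sum>i\<in>UNIV. \<phi> i w *s f i w)) < e)
   \<and> (\<forall>z\<in>\<Omega>.
        (\<forall>h\<in>R. \<exists>c. fdiff h (\<lambda>w. \<Sum>i\<in>UNIV. c i *s f i w) \<in> loc_sub \<Omega> R ip z)
      \<and> (\<forall>c. (\<lambda>w. \<Sum>i\<in>UNIV. c i *s f i w) \<in> loc_sub \<Omega> R ip z \<longrightarrow> (\<forall>i. c i = 0)))"

definition module_map :: "(complex^'n) set
    \<Rightarrow> (complex^'n \<Rightarrow> complex^'m) set \<Rightarrow> ((complex^'n \<Rightarrow> complex^'m) \<Rightarrow> (complex^'n \<Rightarrow> complex^'m) \<Rightarrow> complex)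
    \<Rightarrow> (complex^'n \<Rightarrow> complex^'m) set \<Rightarrow> ((complex^'n \<Rightarrow> complex^'m) \<Rightarrow> (complex^'n \<Rightarrow> complex^'m) \<Rightarrow> complex)
    \<Rightarrow> ((complex^'n \<Rightarrow> complex^'m) \<Rightarrow> (complex^'n \<Rightarrow> complex^'m)) \<Rightarrow> bool" where
  "module_map \<Omega> R ip R' ip' X \<longleftrightarrow>
     (\<forall>F\<in>R. X F \<in> R')
   \<and> (\<forall>F\<in>R. \<forall>G\<in>R. X (\<lambda>w. F w + G w) = (\<lambda>w. X F w + X G w))
   \<and> (\<forall>c. \<forall>F\<in>R. X (fsc c F) = fsc c (X F))
   \<and> (\<exists>C. \<forall>F\<in>R. hnorm ip' (X F) \<le> C * hnorm ip F)
   \<and> (\<forall>\<phi>\<in>A_alg \<Omega>. \<forall>F\<in>R. X (mult \<phi> F) = mult \<phi> (X F))"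

end

theory Submission
  imports Defs
begin

text \<open>Bounded point evaluations force every element of R_z to vanish at z.  Conversely, R
  contains the constants, so c \<mapsto> \<Sum>_i c_i f_i(z) maps C^m onto C^m and is therefore
  injective; if F(z) = 0 and F - \<Sum>_i c_i f_i lies in R_z, then \<Sum>_i c_i f_i(z) = 0, so c = 0
  and F lies in R_z.  Thus R_z consists of the elements vanishing at z, and h \<otimes> 1_z is
  determined by h(z).  A bounded module map sends R_z into R'_z, so X \<otimes> 1 maps the class of
  f_i to the class of X f_i, whose value at z is \<Sum>_j \<psi>_ij(z) g_j(z).\<close>

lemma qf_module_zero: "qf_module \<Omega> R ip \<Longrightarrow> (\<lambda>w. 0) \<in> R"
  by (simp add: qf_module_def)

lemma qf_module_add: "qf_module \<Omega> R ip \<Longrightarrow> F \<in> R \<Longrightarrow> G \<in> R \<Longrightarrow> (\<lambda>w. F w + G w) \<in> R"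
  by (simp add: qf_module_def)

lemma qf_module_fsc: "qf_module \<Omega> R ip \<Longrightarrow> F \<in> R \<Longrightarrow> fsc c F \<in> R"
  by (simp add: qf_module_def)

lemma qf_module_mult: "qf_module \<Omega> R ip \<Longrightarrow> \<phi> \<in> A_alg \<Omega> \<Longrightarrow> F \<in> R \<Longrightarrow> mult \<phi> F \<in> R"
  by (simp add: qf_module_def)

lemma fdiff_eq_add_fsc: "fdiff F G = (\<lambda>w. F w + fsc (-1) G w)"
  by (simp add: fdiff_def fsc_def fun_eq_iff vec_eq_iff)

lemma qf_module_fdiff: "qf_module \<Omega> R ip \<Longrightarrow> F \<in> R \<Longrightarrow> G \<in> R \<Longrightarrow> fdiff F G \<in> R"
  unfolding fdiff_eq_add_fsc by (intro qf_module_add qf_module_fsc)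

lemma qf_module_sum_mult:
  assumes "qf_module \<Omega> R ip" "finite A" "\<forall>k\<in>A. \<phi> k \<in> A_alg \<Omega> \<and> h k \<in> R"
  shows "(\<lambda>w. \<Sum>k\<in>A. \<phi> k w *s h k w) \<in> R"
  using assms(2,3)
proof (induction A rule: finite_induct)
  case empty
  then show ?case using qf_module_zero[OF assms(1)] by simp
next
  case (insert x A)
  then have "(\<lambda>w. mult (\<phi> x) (h x) w + (\<Sum>k\<in>A. \<phi> k w *s h k w)) \<in> R"
    by (intro qf_module_add[OF assms(1)] qf_module_mult[OF assms(1)]) auto
  then show ?case using insert by (simp add: mult_def)
qed

lemma holo_const: "holo U (\<lambda>w. c)"
  unfolding holo_def by (intro ballI exI[of _ 0]) simp

lemma A_alg_const: "(\<lambda>w. c) \<in> A_alg \<Omega>"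
proof -
  have "(\<lambda>w. c) \<in> A_pre \<Omega>"
    unfolding A_pre_def using holo_const by blast
  then show ?thesis
    unfolding A_alg_def by force
qed

lemma qf_module_const:
  assumes "qf_module \<Omega> R ip"
  shows "restr \<Omega> (\<lambda>w. v) \<in> R"
proof -
  have "\<forall>j. (\<lambda>w. (\<lambda>w. v) w $ j) \<in> A_alg \<Omega>"
    using A_alg_const by blast
  then have "restr \<Omega> (\<lambda>w. v) \<in> alg_tensor \<Omega>"
    unfolding alg_tensor_def by blast
  moreover have "alg_tensor \<Omega> \<subseteq> R"
    using assms by (simp add: qf_module_def)
  ultimately show ?thesis by blast
qed

lemma hnorm_bound_pos:
  assumes "\<forall>F\<in>R. a F \<le> C * hnorm ip F"
  shows "\<exists>C>0. \<forall>F\<in>R. a F \<le> C * hnorm ip F"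
proof -
  have "\<forall>F\<in>R. a F \<le> max C 1 * hnorm ip F"
    using assms order_trans[OF _ mult_right_mono[OF max.cobounded1]] by (fastforce simp: hnorm_def)
  then show ?thesis by (intro exI[of _ "max C 1"]) auto
qed

lemma qf_module_eval_bounded:
  assumes "qf_module \<Omega> R ip" "z \<in> \<Omega>"
  shows "\<exists>C>0. \<forall>F\<in>R. norm (F z) \<le> C * hnorm ip F"
proof -
  have "\<forall>z\<in>\<Omega>. \<exists>r>0. \<exists>C. \<forall>w\<in>ball z r. \<forall>F\<in>R. norm (F w) \<le> C * hnorm ip F"
    using assms(1) unfolding qf_module_def by (elim conjE) assumption
  then obtain C where "\<forall>F\<in>R. norm (F z) \<le> C * hnorm ip F"
    using assms(2) by (metis centre_in_ball)
  then show ?thesis by (rule hnorm_bound_pos)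
qed

lemma qf_module_eval_eq_zero_if_approx:
  assumes Q: "qf_module \<Omega> R ip" and z: "z \<in> \<Omega>" and F: "F \<in> R"
    and approx: "\<forall>e>0. \<exists>S\<in>R. S z = 0 \<and> hnorm ip (fdiff F S) < e"
  shows "F z = 0"
proof -
  obtain C where C: "C > 0" "\<forall>F\<in>R. norm (F z) \<le> C * hnorm ip F"
    using qf_module_eval_bounded[OF Q z] by blast
  have "norm (F z) \<le> 0 + e" if "e > 0" for e
  proof -
    have "e / C > 0"
      using \<open>e > 0\<close> \<open>C > 0\<close> by simp
    then obtain S where S: "S \<in> R" "S z = 0" "hnorm ip (fdiff F S) < e / C"
      using approx by blast
    have "norm (F z) = norm (fdiff F S z)"
      using S by (simp add: fdiff_def)
    also have "\<dots> \<le> C * hnorm ip (fdiff F S)"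
      using C qf_module_fdiff[OF Q F S(1)] by blast
    also have "\<dots> < e"
      using S(3) \<open>C > 0\<close> by (simp add: pos_less_divide_eq mult.commute)
    finally show ?thesis by simp
  qed
  then have "norm (F z) \<le> 0"
    by (rule field_le_epsilon)
  then show ?thesis by simp
qed

lemma loc_sub_subset: "loc_sub \<Omega> R ip z \<subseteq> R"
  by (auto simp: loc_sub_def)

lemma loc_sub_vanishes:
  assumes Q: "qf_module \<Omega> R ip" and z: "z \<in> \<Omega>" and F: "F \<in> loc_sub \<Omega> R ip z"
  shows "F z = 0"
proof (rule qf_module_eval_eq_zero_if_approx[OF Q z])
  show "F \<in> R" using F loc_sub_subset by blast
  show "\<forall>e>0. \<exists>S\<in>R. S z = 0 \<and> hnorm ip (fdiff F S) < e"
  proof (intro allI impI)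
    fix e :: real assume "e > 0"
    then obtain N :: nat and \<phi> h where H: "\<forall>k<N. \<phi> k \<in> A_alg \<Omega> \<and> \<phi> k z = 0 \<and> h k \<in> R"
      "hnorm ip (fdiff F (\<lambda>w. \<Sum>k<N. \<phi> k w *s h k w)) < e"
      using F unfolding loc_sub_def by blast
    let ?S = "\<lambda>w. \<Sum>k<N. \<phi> k w *s h k w"
    have "?S \<in> R"
      using H(1) by (intro qf_module_sum_mult[OF Q]) auto
    moreover have "?S z = 0"
      using H(1) by (intro sum.neutral) auto
    ultimately show "\<exists>S\<in>R. S z = 0 \<and> hnorm ip (fdiff F S) < e"
      using H(2) by (intro bexI[of _ ?S] conjI)
  qed
qed

lemma loc_sub_eq_vanishing:
  fixes f :: "'m \<Rightarrow> complex^'n \<Rightarrow> complex^'m"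
  assumes Q: "qf_module \<Omega> R ip" and gen: "generating_set \<Omega> R ip f" and z: "z \<in> \<Omega>"
  shows "loc_sub \<Omega> R ip z = {F\<in>R. F z = 0}"
proof
  show "loc_sub \<Omega> R ip z \<subseteq> {F\<in>R. F z = 0}"
    using loc_sub_vanishes[OF Q z] loc_sub_subset by blast
next
  have decomp: "\<And>h. h \<in> R \<Longrightarrow> \<exists>c. fdiff h (\<lambda>w. \<Sum>i\<in>UNIV. c i *s f i w) \<in> loc_sub \<Omega> R ip z"
    using gen z unfolding generating_set_def by blast
  define ev where "ev = (\<lambda>c::complex^'m. \<Sum>i\<in>UNIV. c$i *s f i z)"
  have "linear ev"
    unfolding ev_def
    by (rule linearI) (auto simp: sum.distrib scaleR_sum_right vector_add_ldistrib vec_eq_iff)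
  moreover have "surj ev"
  proof -
    have "v \<in> range ev" for v
    proof -
      obtain c where "fdiff (restr \<Omega> (\<lambda>w. v)) (\<lambda>w. \<Sum>i\<in>UNIV. c i *s f i w) \<in> loc_sub \<Omega> R ip z"
        using decomp[OF qf_module_const[OF Q]] by blast
      from loc_sub_vanishes[OF Q z this] have "v = ev (\<chi> i. c i)"
        using z by (simp add: fdiff_def restr_def ev_def)
      then show ?thesis by blast
    qed
    then show ?thesis by blast
  qed
  ultimately have inj: "inj ev"
    using linear_surj_imp_inj by blast
  show "{F\<in>R. F z = 0} \<subseteq> loc_sub \<Omega> R ip z"
  proof
    fix F assume F: "F \<in> {F\<in>R. F z = 0}"
    then obtain c where c: "fdiff F (\<lambda>w. \<Sum>i\<in>UNIV. c i *s f i w) \<in> loc_sub \<Omega> R ip z"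
      using decomp by blast
    then have "ev (\<chi> i. c i) = ev 0"
      using loc_sub_vanishes[OF Q z c] F by (simp add: fdiff_def ev_def)
    then have "(\<chi> i. c i) = 0"
      using inj by (simp add: inj_eq)
    then have "\<forall>i. c i = 0"
      by (simp add: vec_eq_iff)
    then show "F \<in> loc_sub \<Omega> R ip z"
      using c by (simp add: fdiff_def)
  qed
qed

lemma loc_class_eq_same_value:
  assumes "qf_module \<Omega> R ip" "generating_set \<Omega> R ip f" "z \<in> \<Omega>" "h \<in> R"
  shows "loc_class \<Omega> R ip z h = {G\<in>R. G z = h z}"
  unfolding loc_class_def loc_sub_eq_vanishing[OF assms(1-3)]
  using qf_module_fdiff[OF assms(1,4)] by (auto simp: fdiff_def)

lemma module_map_in: "module_map \<Omega> R ip R' ip' X \<Longrightarrow> F \<in> R \<Longrightarrow> X F \<in> R'"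
  by (simp add: module_map_def)

lemma module_map_fdiff:
  assumes M: "module_map \<Omega> R ip R' ip' X" and Q: "qf_module \<Omega> R ip" and "F \<in> R" "G \<in> R"
  shows "X (fdiff F G) = fdiff (X F) (X G)"
proof -
  have "X (fdiff F G) = (\<lambda>w. X F w + X (fsc (-1) G) w)"
    unfolding fdiff_eq_add_fsc using M assms(3,4) qf_module_fsc[OF Q] by (simp add: module_map_def)
  also have "\<dots> = fdiff (X F) (X G)"
    using M assms(4) by (simp add: module_map_def fdiff_eq_add_fsc)
  finally show ?thesis .
qed

lemma module_map_zero:
  assumes M: "module_map \<Omega> R ip R' ip' X" and Q: "qf_module \<Omega> R ip"
  shows "X (\<lambda>w. 0) = (\<lambda>w. 0)"
proof -
  have "X (fsc 0 (\<lambda>w. 0)) = fsc 0 (X (\<lambda>w. 0))"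
    using M qf_module_zero[OF Q] by (simp add: module_map_def)
  then show ?thesis by (simp add: fsc_def)
qed

lemma module_map_sum_mult:
  assumes M: "module_map \<Omega> R ip R' ip' X" and Q: "qf_module \<Omega> R ip"
    and "finite A" "\<forall>k\<in>A. \<phi> k \<in> A_alg \<Omega> \<and> h k \<in> R"
  shows "X (\<lambda>w. \<Sum>k\<in>A. \<phi> k w *s h k w) = (\<lambda>w. \<Sum>k\<in>A. \<phi> k w *s X (h k) w)"
  using assms(3,4)
proof (induction A rule: finite_induct)
  case empty
  then show ?case using module_map_zero[OF M Q] by simp
next
  case (insert x A)
  let ?S = "\<lambda>w. \<Sum>k\<in>A. \<phi> k w *s h k w"
  have "?S \<in> R"
    using insert by (intro qf_module_sum_mult[OF Q]) auto
  moreover have "mult (\<phi> x) (h x) \<in> R"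
    using insert.prems by (intro qf_module_mult[OF Q]) auto
  ultimately have "X (\<lambda>w. mult (\<phi> x) (h x) w + ?S w) = (\<lambda>w. X (mult (\<phi> x) (h x)) w + X ?S w)"
    using M by (simp add: module_map_def)
  also have "\<dots> = (\<lambda>w. \<phi> x w *s X (h x) w + (\<Sum>k\<in>A. \<phi> k w *s X (h k) w))"
    using M insert by (simp add: module_map_def mult_def)
  finally show ?case
    using insert.hyps by (simp add: mult_def)
qed

lemma module_map_bounded:
  assumes "module_map \<Omega> R ip R' ip' X"
  shows "\<exists>C>0. \<forall>F\<in>R. hnorm ip' (X F) \<le> C * hnorm ip F"
proof -
  obtain C where "\<forall>F\<in>R. hnorm ip' (X F) \<le> C * hnorm ip F"
    using assms unfolding module_map_def by blast
  then show ?thesis by (rule hnorm_bound_pos)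
qed

lemma module_map_loc_sub:
  assumes M: "module_map \<Omega> R ip R' ip' X" and Q: "qf_module \<Omega> R ip"
    and F: "F \<in> loc_sub \<Omega> R ip z"
  shows "X F \<in> loc_sub \<Omega> R' ip' z"
proof -
  have FR: "F \<in> R" using F loc_sub_subset by blast
  obtain C where C: "C > 0" "\<forall>F\<in>R. hnorm ip' (X F) \<le> C * hnorm ip F"
    using module_map_bounded[OF M] by blast
  have "\<exists>(N::nat) \<phi> h'. (\<forall>k<N. \<phi> k \<in> A_alg \<Omega> \<and> \<phi> k z = 0 \<and> h' k \<in> R') \<and>
          hnorm ip' (fdiff (X F) (\<lambda>w. \<Sum>k<N. \<phi> k w *s h' k w)) < e" if "e > 0" for e
  proof -
    obtain N :: nat and \<phi> h where H: "\<forall>k<N. \<phi> k \<in> A_alg \<Omega> \<and> \<phi> k z = 0 \<and> h k \<in> R"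
      "hnorm ip (fdiff F (\<lambda>w. \<Sum>k<N. \<phi> k w *s h k w)) < e / C"
      using F \<open>e > 0\<close> \<open>C > 0\<close> unfolding loc_sub_def by (auto dest: divide_pos_pos)
    let ?S = "\<lambda>w. \<Sum>k<N. \<phi> k w *s h k w"
    have SR: "?S \<in> R"
      using H(1) by (intro qf_module_sum_mult[OF Q]) auto
    have "X ?S = (\<lambda>w. \<Sum>k<N. \<phi> k w *s X (h k) w)"
      using H(1) by (intro module_map_sum_mult[OF M Q]) auto
    then have "fdiff (X F) (\<lambda>w. \<Sum>k<N. \<phi> k w *s X (h k) w) = X (fdiff F ?S)"
      using module_map_fdiff[OF M Q FR SR] by simp
    moreover have "hnorm ip' (X (fdiff F ?S)) \<le> C * hnorm ip (fdiff F ?S)"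
      using C qf_module_fdiff[OF Q FR SR] by blast
    moreover have "C * hnorm ip (fdiff F ?S) < e"
      using H(2) \<open>C > 0\<close> by (simp add: field_simps)
    ultimately show ?thesis
      using H(1) module_map_in[OF M] by (intro exI[of _ N] exI[of _ \<phi>] exI[of _ "\<lambda>k. X (h k)"]) auto
  qed
  then show ?thesis
    using module_map_in[OF M FR] by (simp add: loc_sub_def)
qed

lemma loc_map_loc_class:
  assumes Q: "qf_module \<Omega> R ip" and Q': "qf_module \<Omega> R' ip'"
    and gen: "generating_set \<Omega> R ip f" and gen': "generating_set \<Omega> R' ip' g"
    and M: "module_map \<Omega> R ip R' ip' X" and z: "z \<in> \<Omega>" and h: "h \<in> R"
  shows "loc_map \<Omega> R' ip' z X (loc_class \<Omega> R ip z h) = loc_class \<Omega> R' ip' z (X h)"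
proof -
  have same_image: "loc_class \<Omega> R' ip' z (X G) = loc_class \<Omega> R' ip' z (X h)"
    if "G \<in> loc_class \<Omega> R ip z h" for G
  proof -
    have G: "G \<in> R" "fdiff h G \<in> loc_sub \<Omega> R ip z"
      using that by (auto simp: loc_class_def)
    then have "X (fdiff h G) z = 0"
      using loc_sub_vanishes[OF Q' z] module_map_loc_sub[OF M Q] by blast
    then have "X G z = X h z"
      using module_map_fdiff[OF M Q h G(1)] by (simp add: fdiff_def)
    then show ?thesis
      using loc_class_eq_same_value[OF Q' gen' z] module_map_in[OF M] G(1) h by simp
  qed
  have "h \<in> loc_class \<Omega> R ip z h"
    using loc_class_eq_same_value[OF Q gen z h] h by simp
  then show ?thesis
    unfolding loc_map_def using same_image by blast
qed

theorem lemma6: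
  fixes \<Omega> :: "(complex^'n) set"
    and R R' :: "(complex^'n \<Rightarrow> complex^'m) set"
    and ip ip' :: "(complex^'n \<Rightarrow> complex^'m) \<Rightarrow> (complex^'n \<Rightarrow> complex^'m) \<Rightarrow> complex"
    and f g :: "'m \<Rightarrow> complex^'n \<Rightarrow> complex^'m"
    and X :: "(complex^'n \<Rightarrow> complex^'m) \<Rightarrow> (complex^'n \<Rightarrow> complex^'m)"
    and \<psi> :: "'m \<Rightarrow> 'm \<Rightarrow> complex^'n \<Rightarrow> complex"
  assumes "bounded_domain \<Omega>"
    and "qf_module \<Omega> R ip" and "qf_module \<Omega> R' ip'"
    and "generating_set \<Omega> R ip f" and "generating_set \<Omega> R' ip' g"
    and "module_map \<Omega> R ip R' ip' X"
    and "\<forall>i j. holo \<Omega> (\<psi> i j)"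
    and "\<forall>i. X (f i) = (\<lambda>w. \<Sum>j\<in>UNIV. \<psi> i j w *s g j w)"
    and "z \<in> \<Omega>"
  shows "loc_map \<Omega> R' ip' z X (loc_class \<Omega> R ip z (f i))
           = loc_class \<Omega> R' ip' z (\<lambda>w. \<Sum>j\<in>UNIV. \<psi> i j z *s g j w)"
proof -
  have fi: "f i \<in> R" and gj: "\<forall>j. g j \<in> R'"
    using assms(4,5) by (simp_all add: generating_set_def)
  have Xfi: "X (f i) \<in> R'"
    using module_map_in[OF assms(6) fi] .
  have P: "(\<lambda>w. \<Sum>j\<in>UNIV. \<psi> i j z *s g j w) \<in> R'"
    using gj A_alg_const by (intro qf_module_sum_mult[OF assms(3)]) auto
  have "loc_map \<Omega> R' ip' z X (loc_class \<Omega> R ip z (f i)) = loc_class \<Omega> R' ip' z (X (f i))"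
    using loc_map_loc_class[OF assms(2-6,9) fi] .
  also have "\<dots> = loc_class \<Omega> R' ip' z (\<lambda>w. \<Sum>j\<in>UNIV. \<psi> i j z *s g j w)"
    using loc_class_eq_same_value[OF assms(3,5,9)] Xfi P assms(8) by simp
  finally show ?thesis .
qed

end
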